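(* Let $G=(V,E)$ be a directed graph and $L\subseteq V$ a set of landmark vertices. For each $w\in V$ let $\mathrm{DL}_{in}(w)=\{l\in L : l \text{ reaches } w\}$ and $\mathrm{DL}_{out}(w)=\{l\in L : w \text{ reaches } l\}$. For $a,b\in V$ say that $\mathrm{DLIntersec}(a,b)$ is true iff $\mathrm{DL}_{out}(a)\cap\mathrm{DL}_{in}(b)\neq\emptyset$. If $\mathrm{DLIntersec}(x,y)$ is false and at least one of $\mathrm{DLIntersec}(x,x)$, $\mathrm{DLIntersec}(y,y)$ is true, then $x$ does not reach $y$ in $G$.
   Context: A vertex $a$ reaches a vertex $b$ in a directed graph if there is a directed path from $a$ to $b$; every vertex reaches itself. *)

theory Defs
  imports Main
begin

definition reaches :: "('a \<times> 'a) set \<Rightarrow> 'a \<Rightarrow> 'a \<Rightarrow> bool" where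
  "reaches E a b \<longleftrightarrow> (a, b) \<in> E\<^sup>*"

definition DL_in :: "('a \<times> 'a) set \<Rightarrow> 'a set \<Rightarrow> 'a \<Rightarrow> 'a set" where
  "DL_in E L w = {l \<in> L. reaches E l w}"

definition DL_out :: "('a \<times> 'a) set \<Rightarrow> 'a set \<Rightarrow> 'a \<Rightarrow> 'a set" where
  "DL_out E L w = {l \<in> L. reaches E w l}"

definition DLIntersec :: "('a \<times> 'a) set \<Rightarrow> 'a set \<Rightarrow> 'a \<Rightarrow> 'a \<Rightarrow> bool" where
  "DLIntersec E L a b \<longleftrightarrow> DL_out E L a \<inter> DL_in E L b \<noteq> {}"

end

theory Submission
  imports Defs
begin

(* Along a path from a to b the in-labels can only grow and the out-labels can only shrink,
   so a common label of a with itself, or of b with itself, is a common label of a and b. *)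

lemma reaches_trans: "reaches E a b \<Longrightarrow> reaches E b c \<Longrightarrow> reaches E a c"
  unfolding reaches_def by (rule rtrancl_trans)

lemma DL_in_mono_reaches: "reaches E a b \<Longrightarrow> DL_in E L a \<subseteq> DL_in E L b"
  unfolding DL_in_def by (blast intro: reaches_trans)

lemma DL_out_antimono_reaches: "reaches E a b \<Longrightarrow> DL_out E L b \<subseteq> DL_out E L a"
  unfolding DL_out_def by (blast intro: reaches_trans)

lemma DLIntersec_reaches_right:
  "reaches E a b \<Longrightarrow> DLIntersec E L a a \<Longrightarrow> DLIntersec E L a b"
  unfolding DLIntersec_def using DL_in_mono_reaches[of E a b L] by blast

lemma DLIntersec_reaches_left:
  "reaches E a b \<Longrightarrow> DLIntersec E L b b \<Longrightarrow> DLIntersec E L a b"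
  unfolding DLIntersec_def using DL_out_antimono_reaches[of E a b L] by blast

theorem theorem2:
  fixes V :: "'a set" and E :: "('a \<times> 'a) set" and L :: "'a set" and x y :: 'a
  assumes "E \<subseteq> V \<times> V" and "L \<subseteq> V" and "x \<in> V" and "y \<in> V"
    and "\<not> DLIntersec E L x y"
    and "DLIntersec E L x x \<or> DLIntersec E L y y"
  shows "\<not> reaches E x y"
  using assms(5,6) DLIntersec_reaches_right[of E x y L] DLIntersec_reaches_left[of E x y L]
  by blast

end
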